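(* Let $(R,\mathfrak{m})$ be a commutative Artinian local ring with identity, $\mathfrak{m}\neq0$ and $\mathfrak{m}^2=0$. In $R[x]$: $L(x)=\{1\}$, $L(x^2)=\{2\}$, $L(x^3)=\{3\}$, $L(x^4)=\{2,4\}$, and $L(x^5)=\{3,5\}$.
   Context: A nonunit polynomial in $R[x]$ is irreducible if in any factorization into two polynomials one factor is a unit of $R[x]$. A positive integer $k$ is a length of $f$ if $f$ is a product of $k$ irreducible polynomials of $R[x]$; $L(f)$ denotes the set of lengths of $f$. *)

theory Defs
  imports "HOL-Computational_Algebra.Polynomial" "HOL-Computational_Algebra.Factorial_Ring"
begin

definition is_ideal :: "'a::comm_ring_1 set \<Rightarrow> bool" where
  "is_ideal I \<longleftrightarrow> 0 \<in> I \<and> (\<forall>a\<in>I. \<forall>b\<in>I. a + b \<in> I) \<and> (\<forall>r. \<forall>a\<in>I. r * a \<in> I)"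

definition maximal_ideal :: "'a::comm_ring_1 set \<Rightarrow> bool" where
  "maximal_ideal M \<longleftrightarrow> is_ideal M \<and> M \<noteq> UNIV \<and>
     (\<forall>J. is_ideal J \<and> M \<subseteq> J \<longrightarrow> J = M \<or> J = UNIV)"

definition artinian_ring :: "'a::comm_ring_1 itself \<Rightarrow> bool" where
  "artinian_ring _ \<longleftrightarrow> (\<forall>f :: nat \<Rightarrow> 'a set. (\<forall>n. is_ideal (f n)) \<and> (\<forall>n. f (Suc n) \<subseteq> f n)
       \<longrightarrow> (\<exists>N. \<forall>n\<ge>N. f n = f N))"

definition local_ring :: "'a::comm_ring_1 itself \<Rightarrow> bool" where
  "local_ring _ \<longleftrightarrow> (\<exists>!M :: 'a set. maximal_ideal M)"

definition max_ideal :: "'a::comm_ring_1 itself \<Rightarrow> 'a set" where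
  "max_ideal _ = (THE M :: 'a set. maximal_ideal M)"

definition lengths :: "'a::comm_ring_1 poly \<Rightarrow> nat set" where
  "lengths f = {k. k > 0 \<and> (\<exists>ps :: 'a poly list. length ps = k \<and>
       (\<forall>p\<in>set ps. irreducible p) \<and> prod_list ps = f)}"

end

theory Submission
  imports Defs
begin

text \<open>Modulo the maximal ideal \<open>M\<close>, every divisor of \<open>x\<^sup>n\<close> becomes a unit times a power \<open>x\<^sup>e\<close>;
  call \<open>e\<close> its residual degree. Residual degrees add along factorizations, units are exactly the
  divisors of residual degree \<open>0\<close>, and divisors of residual degree \<open>1\<close> are irreducible, so every
  length of \<open>x\<^sup>n\<close> lies in \<open>{1..n}\<close> and \<open>n\<close> is one. Since \<open>M\<^sup>2 = 0\<close>, a factor \<open>p\<close> of residual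
  degree \<open>a \<ge> 2\<close> whose cofactor \<open>s\<close> has residual degree \<open>b < a\<close>, or \<open>s\<^sub>b\<^sub>-\<^sub>a = 0\<close>,
  must have \<open>p(0) = 0\<close>, so \<open>x\<close> splits off and \<open>p\<close> is reducible. This rules out length \<open>n - 1\<close>
  and, for odd \<open>n\<close>, length \<open>2\<close>; length \<open>1\<close> fails as \<open>x\<^sup>n = x \<cdot> x\<^sup>n\<^sup>-\<^sup>1\<close>. Conversely, for \<open>0 \<noteq> c \<in> M\<close> the factorization
  \<open>x\<^sup>4 = (x\<^sup>2 + c)(x\<^sup>2 - c)\<close> into irreducibles gives the lengths \<open>2\<close> of \<open>x\<^sup>4\<close> and \<open>3\<close> of \<open>x\<^sup>5\<close>.\<close>

lemma ideal_eq_UNIV_if_one_mem: "is_ideal I \<Longrightarrow> 1 \<in> I \<Longrightarrow> I = UNIV"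
  unfolding is_ideal_def by (metis UNIV_eq_I mult_1_right)

lemma prod_list_remove1:
  "x \<in> set xs \<Longrightarrow> prod_list xs = x * prod_list (remove1 x (xs :: 'a::comm_monoid_mult list))"
  by (induction xs) (auto simp: ac_simps)

lemma length_in_lengths:
  "ps \<noteq> [] \<Longrightarrow> \<forall>p\<in>set ps. irreducible p \<Longrightarrow> prod_list ps = f \<Longrightarrow> length ps \<in> lengths f"
  unfolding lengths_def by auto

lemma coeff_x_power: "coeff ([:0, 1:] ^ n) i = (if i = n then 1 else 0)"
  by (metis coeff_monom monom_altdef smult_1_left)

locale square_zero_local =
  fixes M :: "'a::comm_ring_1 set"
  assumes maximal: "maximal_ideal M"
    and square_zero: "a \<in> M \<Longrightarrow> b \<in> M \<Longrightarrow> a * b = 0"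
begin

lemma ideal: "is_ideal M"
  using maximal unfolding maximal_ideal_def by blast

lemma zero_mem [simp]: "0 \<in> M"
  using ideal unfolding is_ideal_def by blast

lemma add_mem: "a \<in> M \<Longrightarrow> b \<in> M \<Longrightarrow> a + b \<in> M"
  using ideal unfolding is_ideal_def by blast

lemma mult_mem_left: "a \<in> M \<Longrightarrow> r * a \<in> M"
  using ideal unfolding is_ideal_def by blast

lemma mult_mem_right: "a \<in> M \<Longrightarrow> a * r \<in> M"
  using mult_mem_left[of a r] by (simp add: mult.commute)

lemma uminus_mem: "a \<in> M \<Longrightarrow> - a \<in> M"
  using mult_mem_left[of a "-1"] by simp

lemma one_not_mem: "1 \<notin> M"
  using maximal ideal_eq_UNIV_if_one_mem unfolding maximal_ideal_def by blast

lemma sum_mem: "(\<And>i. i \<in> A \<Longrightarrow> h i \<in> M) \<Longrightarrow> sum h A \<in> M"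
  by (induction A rule: infinite_finite_induct) (auto simp: add_mem)

text \<open>Maximality gives \<open>1 = m + r a\<close> with \<open>m \<in> M\<close>, and \<open>1 - m\<close> is a unit because \<open>m\<^sup>2 = 0\<close>;
  so no appeal to Zorn's lemma is needed to see that \<open>M\<close> is the set of nonunits.\<close>

lemma unit_if_not_mem:
  assumes a: "a \<notin> M"
  shows "a dvd 1"
proof -
  define J where "J = {m + r * a | m r. m \<in> M}"
  have "is_ideal J"
    unfolding is_ideal_def J_def
  proof (intro conjI ballI allI)
    show "0 \<in> {m + r * a | m r. m \<in> M}"
      by (rule CollectI, rule exI[of _ 0], rule exI[of _ 0]) simp
  next
    fix x y assume "x \<in> {m + r * a | m r. m \<in> M}" "y \<in> {m + r * a | m r. m \<in> M}"
    then obtain m r m' r' where "x = m + r * a" "y = m' + r' * a" "m \<in> M" "m' \<in> M" by blast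
    then show "x + y \<in> {m + r * a | m r. m \<in> M}"
      by (intro CollectI exI[of _ "m + m'"] exI[of _ "r + r'"]) (simp add: add_mem algebra_simps)
  next
    fix s x assume "x \<in> {m + r * a | m r. m \<in> M}"
    then obtain m r where "x = m + r * a" "m \<in> M" by blast
    then have "s * x = s * m + (s * r) * a" "s * m \<in> M"
      by (simp_all add: mult_mem_left distrib_left mult.assoc)
    then show "s * x \<in> {m + r * a | m r. m \<in> M}" by blast
  qed
  moreover have "M \<subseteq> J"
  proof
    fix m assume "m \<in> M"
    moreover have "m = m + 0 * a" by simp
    ultimately show "m \<in> J" unfolding J_def by blast
  qed
  moreover have "J \<noteq> M"
  proof -
    have "a \<in> J" unfolding J_def by (rule CollectI, rule exI[of _ 0], rule exI[of _ 1]) simp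
    then show ?thesis using a by blast
  qed
  ultimately have "J = UNIV"
    using maximal unfolding maximal_ideal_def by blast
  then obtain m r where m: "m \<in> M" and one: "1 = m + r * a"
    unfolding J_def by blast
  have "r * a = 1 - m"
    using one by (simp add: algebra_simps)
  then have "a * (r * (1 + m)) = (1 - m) * (1 + m)"
    by (metis mult.assoc mult.commute)
  also have "\<dots> = 1 - m * m"
    by (simp add: algebra_simps)
  also have "\<dots> = 1"
    using square_zero[OF m m] by simp
  finally show ?thesis by (rule dvdI[OF sym])
qed

lemma not_mem_if_unit: "u dvd 1 \<Longrightarrow> u \<notin> M"
  by (metis dvdE mult_mem_right one_not_mem)

lemma mult_not_mem: "a \<notin> M \<Longrightarrow> b \<notin> M \<Longrightarrow> a * b \<notin> M"
  using mult_dvd_mono[of a 1 b 1] unit_if_not_mem not_mem_if_unit by simp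

lemma sum_not_mem_if_single_not_mem:
  assumes "finite A" "k \<in> A" "h k \<notin> M" "\<And>i. i \<in> A \<Longrightarrow> i \<noteq> k \<Longrightarrow> h i \<in> M"
  shows "sum h A \<notin> M"
proof
  assume "sum h A \<in> M"
  moreover have "sum h (A - {k}) \<in> M" by (rule sum_mem) (use assms(4) in auto)
  moreover have "h k = sum h A - sum h (A - {k})"
    using assms(1,2) by (simp add: sum.remove)
  ultimately show False
    using assms(3) add_mem uminus_mem by (metis diff_conv_add_uminus)
qed

text \<open>\<open>R/M\<close> is a field, and \<open>residually_monomial e f\<close> says that the image of \<open>f\<close> in
  \<open>(R/M)[x]\<close> is a nonzero multiple of \<open>x\<^sup>e\<close>.\<close>

definition residually_monomial :: "nat \<Rightarrow> 'a poly \<Rightarrow> bool" where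
  "residually_monomial e f \<longleftrightarrow> coeff f e \<notin> M \<and> (\<forall>i. i \<noteq> e \<longrightarrow> coeff f i \<in> M)"

lemma residually_monomial_unique:
  "residually_monomial a f \<Longrightarrow> residually_monomial b f \<Longrightarrow> a = b"
  unfolding residually_monomial_def by blast

lemma residually_monomial_nonzero: "residually_monomial e f \<Longrightarrow> f \<noteq> 0"
  unfolding residually_monomial_def by auto

lemma residually_monomial_one: "residually_monomial 0 1"
  unfolding residually_monomial_def using one_not_mem by (auto simp: coeff_1)

lemma residually_monomial_x_power: "residually_monomial n ([:0, 1:] ^ n)"
  unfolding residually_monomial_def using one_not_mem by (simp add: coeff_x_power)

lemma coeff_mult_not_mem:
  assumes "coeff f i \<notin> M" "coeff g j \<notin> M"
    and "\<And>k. k \<le> i + j \<Longrightarrow> k \<noteq> i \<Longrightarrow> coeff f k \<in> M \<or> coeff g (i + j - k) \<in> M"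
  shows "coeff (f * g) (i + j) \<notin> M"
  unfolding coeff_mult
proof (rule sum_not_mem_if_single_not_mem[where k = i])
  show "coeff f i * coeff g (i + j - i) \<notin> M"
    using assms(1,2) mult_not_mem by simp
  show "coeff f k * coeff g (i + j - k) \<in> M" if "k \<in> {..i + j}" "k \<noteq> i" for k
    using assms(3)[of k] that mult_mem_left mult_mem_right by auto
qed auto

lemma residually_monomial_mult:
  assumes f: "residually_monomial a f" and g: "residually_monomial b g"
  shows "residually_monomial (a + b) (f * g)"
  unfolding residually_monomial_def
proof (intro conjI allI impI)
  show "coeff (f * g) (a + b) \<notin> M"
    using f g by (intro coeff_mult_not_mem) (auto simp: residually_monomial_def)
  fix n assume "n \<noteq> a + b"
  then have "coeff f i \<in> M \<or> coeff g (n - i) \<in> M" if "i \<le> n" for i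
    using f g that \<open>n \<noteq> a + b\<close> unfolding residually_monomial_def by (metis le_add_diff_inverse)
  then show "coeff (f * g) n \<in> M"
    unfolding coeff_mult by (intro sum_mem) (auto intro: mult_mem_left mult_mem_right)
qed

lemma residually_monomial_prod_list:
  "(\<And>p. p \<in> set ps \<Longrightarrow> residually_monomial (d p) p)
    \<Longrightarrow> residually_monomial (\<Sum>p\<leftarrow>ps. d p) (prod_list ps)"
  by (induction ps) (auto simp: residually_monomial_one residually_monomial_mult)

lemma finite_coeffs_not_mem: "finite {i. coeff f i \<notin> M}"
  by (rule finite_subset[of _ "{..degree f}"]) (auto intro: ccontr simp: coeff_eq_0)

lemma coeffs_not_mem_nonempty:
  assumes "residually_monomial n (f * g)"
  shows "{i. coeff f i \<notin> M} \<noteq> {}"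
proof
  assume "{i. coeff f i \<notin> M} = {}"
  then have "coeff (f * g) n \<in> M"
    unfolding coeff_mult by (intro sum_mem) (auto intro: mult_mem_right)
  then show False
    using assms unfolding residually_monomial_def by blast
qed

lemma coeff_mult_Min_not_mem:
  assumes "{i. coeff f i \<notin> M} \<noteq> {}" "{j. coeff g j \<notin> M} \<noteq> {}"
  shows "coeff (f * g) (Min {i. coeff f i \<notin> M} + Min {j. coeff g j \<notin> M}) \<notin> M"
proof (rule coeff_mult_not_mem)
  show "coeff f (Min {i. coeff f i \<notin> M}) \<notin> M" "coeff g (Min {j. coeff g j \<notin> M}) \<notin> M"
    using assms Min_in[OF finite_coeffs_not_mem] by auto
  fix k assume "k \<le> Min {i. coeff f i \<notin> M} + Min {j. coeff g j \<notin> M}" "k \<noteq> Min {i. coeff f i \<notin> M}"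
  then have "k < Min {i. coeff f i \<notin> M} \<or>
      Min {i. coeff f i \<notin> M} + Min {j. coeff g j \<notin> M} - k < Min {j. coeff g j \<notin> M}"
    by linarith
  then show "coeff f k \<in> M \<or> coeff g (Min {i. coeff f i \<notin> M} + Min {j. coeff g j \<notin> M} - k) \<in> M"
    using Min_le[OF finite_coeffs_not_mem] by (metis (mono_tags) mem_Collect_eq not_le)
qed

lemma coeff_mult_Max_not_mem:
  assumes "{i. coeff f i \<notin> M} \<noteq> {}" "{j. coeff g j \<notin> M} \<noteq> {}"
  shows "coeff (f * g) (Max {i. coeff f i \<notin> M} + Max {j. coeff g j \<notin> M}) \<notin> M"
proof (rule coeff_mult_not_mem)
  show "coeff f (Max {i. coeff f i \<notin> M}) \<notin> M" "coeff g (Max {j. coeff g j \<notin> M}) \<notin> M"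
    using assms Max_in[OF finite_coeffs_not_mem] by auto
  fix k assume "k \<le> Max {i. coeff f i \<notin> M} + Max {j. coeff g j \<notin> M}" "k \<noteq> Max {i. coeff f i \<notin> M}"
  then have "Max {i. coeff f i \<notin> M} < k \<or>
      Max {j. coeff g j \<notin> M} < Max {i. coeff f i \<notin> M} + Max {j. coeff g j \<notin> M} - k"
    by linarith
  then show "coeff f k \<in> M \<or> coeff g (Max {i. coeff f i \<notin> M} + Max {j. coeff g j \<notin> M} - k) \<in> M"
    using Max_ge[OF finite_coeffs_not_mem] by (metis (mono_tags) mem_Collect_eq not_le)
qed

text \<open>The lowest and the highest coefficients of \<open>f\<close> and \<open>g\<close> outside \<open>M\<close> multiply to
  coefficients of \<open>f * g\<close> outside \<open>M\<close>; both must sit in degree \<open>n\<close>, so lowest equals highest.\<close>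

lemma residually_monomial_factors:
  assumes "residually_monomial n (f * g)"
  obtains a b where "residually_monomial a f" "residually_monomial b g"
proof -
  define Sf Sg where "Sf = {i. coeff f i \<notin> M}" and "Sg = {j. coeff g j \<notin> M}"
  have ne: "Sf \<noteq> {}" "Sg \<noteq> {}"
    using assms coeffs_not_mem_nonempty[of n f g] coeffs_not_mem_nonempty[of n g f]
    unfolding Sf_def Sg_def by (simp_all add: mult.commute)
  have "Min Sf + Min Sg = n" "Max Sf + Max Sg = n"
    using coeff_mult_Min_not_mem[OF ne[unfolded Sf_def Sg_def]]
      coeff_mult_Max_not_mem[OF ne[unfolded Sf_def Sg_def]] assms
    unfolding Sf_def Sg_def residually_monomial_def by blast+
  moreover have fin: "finite Sf" "finite Sg"
    unfolding Sf_def Sg_def by (simp_all add: finite_coeffs_not_mem)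
  moreover have "Min Sf \<le> Max Sf" "Min Sg \<le> Max Sg"
    using fin ne by simp_all
  ultimately have "Max Sf = Min Sf" "Max Sg = Min Sg"
    by linarith+
  then have "residually_monomial (Min Sf) f" "residually_monomial (Min Sg) g"
    using fin ne Min_in Min_le Max_ge unfolding residually_monomial_def Sf_def Sg_def
    by (metis (no_types, lifting) antisym mem_Collect_eq)+
  then show thesis by (rule that)
qed

lemma mult_eq_0_if_coeffs_mem:
  assumes "\<And>i. coeff h i \<in> M" "\<And>i. coeff k i \<in> M"
  shows "h * k = 0"
  by (rule poly_eqI) (simp add: coeff_mult assms square_zero)

text \<open>Write \<open>f = c + h\<close> with \<open>c\<close> a unit constant and all coefficients of \<open>h\<close> in \<open>M\<close>;
  then \<open>h\<^sup>2 = 0\<close> and \<open>c\<^sup>-\<^sup>1 (1 - c\<^sup>-\<^sup>1 h)\<close> inverts \<open>f\<close>.\<close>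

lemma unit_if_residually_monomial_0:
  assumes "residually_monomial 0 f"
  shows "f dvd 1"
proof -
  obtain c' where c': "coeff f 0 * c' = 1"
    using assms unit_if_not_mem unfolding residually_monomial_def by (metis dvdE)
  define C h where "C = [:c':]" and "h = f - [:coeff f 0:]"
  have hM: "coeff h i \<in> M" for i
    using assms unfolding h_def residually_monomial_def by (cases i) auto
  have hh: "h * h = 0"
    by (rule mult_eq_0_if_coeffs_mem[OF hM hM])
  have "f * C = 1 + C * h"
    using c' unfolding C_def h_def by (simp add: algebra_simps one_pCons)
  then have "f * (C * (1 - C * h)) = (1 + C * h) * (1 - C * h)"
    by (metis mult.assoc)
  also have "\<dots> = 1 - C * C * (h * h)"
    by (simp add: algebra_simps)
  finally show ?thesis
    using hh by (simp add: dvdI)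
qed

lemma residually_monomial_0_if_unit:
  assumes "f dvd 1"
  shows "residually_monomial 0 f"
proof -
  obtain g where "f * g = 1"
    using assms by (metis dvdE)
  then obtain a b where ab: "residually_monomial a f" "residually_monomial b g"
    using residually_monomial_factors residually_monomial_one by metis
  then have "residually_monomial (a + b) 1"
    using residually_monomial_mult \<open>f * g = 1\<close> by metis
  then have "a + b = 0"
    using residually_monomial_one residually_monomial_unique by blast
  then show ?thesis
    using ab by simp
qed

lemma not_unit_if_residually_monomial:
  assumes "residually_monomial e f" "0 < e"
  shows "\<not> f dvd 1"
proof
  assume "f dvd 1"
  then have "residually_monomial 0 f"
    by (rule residually_monomial_0_if_unit)
  then show False
    using assms residually_monomial_unique by blast
qed

lemma irreducible_if_residually_monomial_1:
  assumes f: "residually_monomial 1 f"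
  shows "irreducible f"
proof (rule irreducibleI)
  show "f \<noteq> 0"
    using f by (rule residually_monomial_nonzero)
  show "\<not> f dvd 1"
    using f by (rule not_unit_if_residually_monomial) simp
  fix a b assume "f = a * b"
  then have "residually_monomial 1 (a * b)"
    using f by simp
  then obtain d e where de: "residually_monomial d a" "residually_monomial e b"
    by (rule residually_monomial_factors)
  then have "residually_monomial (d + e) f"
    using \<open>f = a * b\<close> by (simp add: residually_monomial_mult)
  then have "d + e = 1"
    using f by (rule residually_monomial_unique)
  then have "d = 0 \<or> e = 0"
    by auto
  then show "a dvd 1 \<or> b dvd 1"
    using de unit_if_residually_monomial_0 by auto
qed

definition residual_degree :: "'a poly \<Rightarrow> nat" where
  "residual_degree f = (THE e. residually_monomial e f)"

lemma residual_degree_eq: "residually_monomial e f \<Longrightarrow> residual_degree f = e"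
  unfolding residual_degree_def using residually_monomial_unique by blast

lemma residually_monomial_factor_x_power:
  assumes "p dvd [:0, 1:] ^ n"
  shows "residually_monomial (residual_degree p) p"
proof -
  obtain g where "[:0, 1:] ^ n = p * g"
    using assms by (rule dvdE)
  then obtain e where "residually_monomial e p"
    using residually_monomial_x_power residually_monomial_factors by metis
  then show ?thesis
    using residual_degree_eq by simp
qed

lemma irreducible_factor_x_power:
  assumes "irreducible p" "p dvd [:0, 1:] ^ n"
  shows "residually_monomial (residual_degree p) p" "1 \<le> residual_degree p"
proof -
  show rm: "residually_monomial (residual_degree p) p"
    using assms(2) by (rule residually_monomial_factor_x_power)
  show "1 \<le> residual_degree p"
  proof (rule ccontr)
    assume "\<not> 1 \<le> residual_degree p"
    then have "residually_monomial 0 p"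
      using rm by (metis less_one not_le)
    then have "p dvd 1"
      by (rule unit_if_residually_monomial_0)
    then show False
      using assms(1) irreducible_not_unit by blast
  qed
qed

lemma sum_residual_degrees_eq:
  assumes "prod_list ps = [:0, 1:] ^ n"
  shows "(\<Sum>p\<leftarrow>ps. residual_degree p) = n"
proof -
  have "residually_monomial (residual_degree p) p" if "p \<in> set ps" for p
    using that assms prod_list_dvd residually_monomial_factor_x_power by metis
  then have "residually_monomial (\<Sum>p\<leftarrow>ps. residual_degree p) ([:0, 1:] ^ n)"
    using residually_monomial_prod_list assms by metis
  then show ?thesis
    using residually_monomial_x_power residually_monomial_unique by blast
qed

lemma lengths_x_power_subset: "lengths ([:0, 1:] ^ n :: 'a poly) \<subseteq> {1..n}"
proof
  fix k assume "k \<in> lengths ([:0, 1:] ^ n :: 'a poly)"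
  then obtain ps :: "'a poly list" where ps: "length ps = k" "\<forall>p\<in>set ps. irreducible p"
      "prod_list ps = [:0, 1:] ^ n" and "0 < k"
    unfolding lengths_def by blast
  have "1 \<le> residual_degree p" if "p \<in> set ps" for p
    using that ps(2,3) prod_list_dvd[OF that] irreducible_factor_x_power(2) by metis
  then have "(\<Sum>p\<leftarrow>ps. 1) \<le> (\<Sum>p\<leftarrow>ps. residual_degree p)"
    by (rule sum_list_mono)
  then show "k \<in> {1..n}"
    using ps \<open>0 < k\<close> sum_residual_degrees_eq by (simp add: sum_list_triv)
qed

lemma irreducible_x: "irreducible ([:0, 1:] :: 'a poly)"
  using irreducible_if_residually_monomial_1 residually_monomial_x_power[of 1] by simp

lemma x_power_in_lengths: "0 < n \<Longrightarrow> n \<in> lengths ([:0, 1:] ^ n :: 'a poly)"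
  using length_in_lengths[of "replicate n ([:0, 1:] :: 'a poly)"] irreducible_x
  by (simp add: prod_list_replicate)

lemma x_power_not_unit: "0 < k \<Longrightarrow> \<not> ([:0, 1:] :: 'a poly) ^ k dvd 1"
  using residually_monomial_x_power by (rule not_unit_if_residually_monomial)

lemma not_irreducible_x_power:
  assumes "2 \<le> n"
  shows "\<not> irreducible ([:0, 1:] ^ n :: 'a poly)"
proof
  assume "irreducible ([:0, 1:] ^ n :: 'a poly)"
  moreover have "[:0, 1:] ^ n = [:0, 1:] ^ 1 * ([:0, 1:] :: 'a poly) ^ (n - 1)"
    using assms by (metis power_add le_add_diff_inverse one_le_numeral order.trans)
  ultimately show False
    using irreducibleD x_power_not_unit[of 1] x_power_not_unit[of "n - 1"] assms by fastforce
qed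

lemma one_not_in_lengths_x_power:
  assumes "2 \<le> n"
  shows "1 \<notin> lengths ([:0, 1:] ^ n :: 'a poly)"
  using not_irreducible_x_power[OF assms] unfolding lengths_def
  by (auto simp: length_Suc_conv)

text \<open>Comparing coefficients of \<open>x\<^sup>b\<close> leaves only \<open>p\<^sub>0 s\<^sub>b = 0\<close> with \<open>s\<^sub>b\<close> a unit, so
  \<open>p = x q\<close>, and \<open>q\<close> is still residually \<open>x\<^sup>a\<^sup>-\<^sup>1\<close>, hence not a unit.\<close>

lemma not_irreducible_factor_x_power:
  assumes ps: "p * s = [:0, 1:] ^ n" and p: "residually_monomial a p" and a: "2 \<le> a"
    and s: "residually_monomial b s" and low: "b < a \<or> coeff s (b - a) = 0"
  shows "\<not> irreducible p"
proof
  assume irr: "irreducible p"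
  have "residually_monomial (a + b) ([:0, 1:] ^ n)"
    using residually_monomial_mult[OF p s] ps by simp
  then have "a + b = n"
    using residually_monomial_x_power by (rule residually_monomial_unique)
  then have "b \<noteq> n"
    using a by simp
  have "coeff p i * coeff s (b - i) = 0" if i: "i \<in> {..b} - {0}" for i
  proof (cases "i = a")
    case True
    then show ?thesis using low i by auto
  next
    case False
    then have "coeff p i \<in> M" "coeff s (b - i) \<in> M"
      using p s i unfolding residually_monomial_def by auto
    then show ?thesis
      by (rule square_zero)
  qed
  then have "coeff (p * s) b = coeff p 0 * coeff s b"
    unfolding coeff_mult by (simp add: sum.remove[of "{..b}" 0])
  then have "coeff p 0 * coeff s b = 0"
    using ps \<open>b \<noteq> n\<close> by (simp add: coeff_x_power)
  moreover obtain t where "coeff s b * t = 1"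
    using s unit_if_not_mem unfolding residually_monomial_def by (metis dvdE)
  ultimately have "coeff p 0 = coeff p 0 * (coeff s b * t)"
    by simp
  also have "\<dots> = 0"
    using \<open>coeff p 0 * coeff s b = 0\<close> by (simp add: mult.assoc[symmetric])
  finally have "coeff p 0 = 0" .
  then obtain q where "p = pCons 0 q"
    by (metis coeff_pCons_0 pCons_cases)
  then have q: "p = [:0, 1:] * q" and coeff_q: "\<And>i. coeff q i = coeff p (Suc i)"
    by simp_all
  have "Suc (a - 1) = a"
    using a by simp
  then have "residually_monomial (a - 1) q"
    using p unfolding residually_monomial_def coeff_q by (metis Suc_inject)
  then have "\<not> q dvd 1"
    by (rule not_unit_if_residually_monomial) (use a in simp)
  then show False
    using irreducibleD[OF irr q] x_power_not_unit[of 1] by simp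
qed

lemma two_not_in_lengths_x_power:
  assumes "odd n"
  shows "2 \<notin> lengths ([:0, 1:] ^ n :: 'a poly)"
proof
  assume "2 \<in> lengths ([:0, 1:] ^ n :: 'a poly)"
  then obtain p q :: "'a poly" where irr: "irreducible p" "irreducible q"
    and pq: "p * q = [:0, 1:] ^ n"
    unfolding lengths_def by (auto simp: length_Suc_conv numeral_2_eq_2)
  have qp: "q * p = [:0, 1:] ^ n"
    using pq by (simp add: mult.commute)
  have p: "residually_monomial (residual_degree p) p" "1 \<le> residual_degree p"
    using irreducible_factor_x_power[OF irr(1)] pq by (metis dvd_triv_left)+
  have q: "residually_monomial (residual_degree q) q" "1 \<le> residual_degree q"
    using irreducible_factor_x_power[OF irr(2)] pq by (metis dvd_triv_right)+
  have "residual_degree p + residual_degree q = n"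
    using sum_residual_degrees_eq[of "[p, q]"] pq by simp
  then have "residual_degree p \<noteq> residual_degree q"
    using assms by auto
  then have "residual_degree q < residual_degree p \<or> residual_degree p < residual_degree q"
    by linarith
  then show False
  proof
    assume "residual_degree q < residual_degree p"
    then show False
      using not_irreducible_factor_x_power[OF pq p(1) _ q(1)] q(2) irr(1) by simp
  next
    assume "residual_degree p < residual_degree q"
    then show False
      using not_irreducible_factor_x_power[OF qp q(1) _ p(1)] p(2) irr(2) by simp
  qed
qed

text \<open>A coefficient of degree \<open>j\<close> of a product of \<open>k\<close> polynomials is a sum of products
  involving at least \<open>k - j\<close> constant terms; if these lie in \<open>M\<close> and \<open>k - j \<ge> 2\<close>, it vanishes.\<close>

lemma low_coeff_prod_list:
  assumes "\<forall>p\<in>set ps. coeff p 0 \<in> M"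
  shows "(j < length ps \<longrightarrow> coeff (prod_list ps) j \<in> M) \<and>
    (j + 2 \<le> length ps \<longrightarrow> coeff (prod_list ps) j = 0)"
  using assms
proof (induction ps arbitrary: j)
  case Nil
  then show ?case by simp
next
  case (Cons p ps)
  have p0: "coeff p 0 \<in> M"
    using Cons.prems by simp
  have IH: "(i < length ps \<longrightarrow> coeff (prod_list ps) i \<in> M) \<and>
      (i + 2 \<le> length ps \<longrightarrow> coeff (prod_list ps) i = 0)" for i
    using Cons by simp
  show ?case
  proof (intro conjI impI)
    assume "j < length (p # ps)"
    then have "coeff p i * coeff (prod_list ps) (j - i) \<in> M" if "i \<le> j" for i
      using IH[of "j - i"] p0 that mult_mem_left mult_mem_right by (cases "i = 0") auto
    then show "coeff (prod_list (p # ps)) j \<in> M"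
      unfolding prod_list.Cons coeff_mult by (intro sum_mem) simp
  next
    assume "j + 2 \<le> length (p # ps)"
    then have "coeff p i * coeff (prod_list ps) (j - i) = 0" if "i \<le> j" for i
      using IH[of "j - i"] IH[of j] p0 that square_zero by (cases "i = 0") auto
    then show "coeff (prod_list (p # ps)) j = 0"
      by (simp add: coeff_mult)
  qed
qed

lemma not_irreducible_factor_x_power_prod_list:
  assumes p_qs: "p * prod_list qs = [:0, 1:] ^ n" and p: "residually_monomial 2 p"
    and qs: "residually_monomial (length qs) (prod_list qs)" and const: "\<forall>q\<in>set qs. coeff q 0 \<in> M"
  shows "\<not> irreducible p"
proof (rule not_irreducible_factor_x_power[OF p_qs p _ qs])
  show "length qs < 2 \<or> coeff (prod_list qs) (length qs - 2) = 0"
    using low_coeff_prod_list[OF const, of "length qs - 2"] by auto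
qed simp

text \<open>The \<open>n - 1\<close> residual degrees are positive and sum to \<open>n\<close>, so one factor has residual degree
  \<open>2\<close> and all others residual degree \<open>1\<close>.\<close>

lemma pred_not_in_lengths_x_power:
  assumes n: "3 \<le> n"
  shows "n - 1 \<notin> lengths ([:0, 1:] ^ n :: 'a poly)"
proof
  assume "n - 1 \<in> lengths ([:0, 1:] ^ n :: 'a poly)"
  then obtain ps :: "'a poly list" where len: "length ps = n - 1"
    and irr: "\<forall>p\<in>set ps. irreducible p" and prod: "prod_list ps = [:0, 1:] ^ n"
    unfolding lengths_def by blast
  have deg: "residually_monomial (residual_degree p) p" "1 \<le> residual_degree p"
    if "p \<in> set ps" for p
    using that irr prod prod_list_dvd[OF that] irreducible_factor_x_power by metis+
  have sum: "(\<Sum>p\<leftarrow>ps. residual_degree p) = n"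
    using prod by (rule sum_residual_degrees_eq)
  have "\<exists>p\<in>set ps. 2 \<le> residual_degree p"
  proof (rule ccontr)
    assume "\<not> ?thesis"
    then have "residual_degree q \<le> 1" if "q \<in> set ps" for q
      using that by auto
    then have "(\<Sum>q\<leftarrow>ps. residual_degree q) \<le> (\<Sum>q\<leftarrow>ps. 1)"
      by (rule sum_list_mono)
    then show False
      using sum len n by (simp add: sum_list_triv)
  qed
  then obtain p where p: "p \<in> set ps" "2 \<le> residual_degree p"
    by blast
  define qs where "qs = remove1 p ps"
  have qs_sub: "set qs \<subseteq> set ps"
    unfolding qs_def by (rule set_remove1_subset)
  have "length qs \<le> (\<Sum>q\<leftarrow>qs. residual_degree q)"
    using qs_sub deg(2) sum_list_mono[of qs "\<lambda>_. 1" residual_degree] by (force simp: sum_list_triv)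
  moreover have "residual_degree p + (\<Sum>q\<leftarrow>qs. residual_degree q) = n"
    using sum_list_map_remove1[OF p(1), of residual_degree] sum unfolding qs_def by simp
  moreover have "length qs = n - 2"
    using len p(1) unfolding qs_def by (simp add: length_remove1)
  ultimately have "residual_degree p = 2" "(\<Sum>q\<leftarrow>qs. residual_degree q) = length qs"
    using p(2) by linarith+
  then have "residually_monomial 2 p" "residually_monomial (length qs) (prod_list qs)"
    using deg(1)[OF p(1)] qs_sub deg(1) residually_monomial_prod_list[of qs residual_degree] by auto
  moreover have "\<forall>q\<in>set qs. coeff q 0 \<in> M"
    using qs_sub deg unfolding residually_monomial_def by (metis not_one_le_zero subsetD)
  moreover have "p * prod_list qs = [:0, 1:] ^ n"
    using prod_list_remove1[OF p(1)] prod unfolding qs_def by simp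
  ultimately show False
    using not_irreducible_factor_x_power_prod_list irr p(1) by blast
qed

lemma irreducible_if_residually_monomial_2:
  assumes f: "residually_monomial 2 f" and f0: "coeff f 0 \<noteq> 0"
  shows "irreducible f"
proof (rule irreducibleI)
  show "f \<noteq> 0"
    using f by (rule residually_monomial_nonzero)
  show "\<not> f dvd 1"
    using f by (rule not_unit_if_residually_monomial) simp
  fix a b assume "f = a * b"
  then have "residually_monomial 2 (a * b)"
    using f by simp
  then obtain d e where de: "residually_monomial d a" "residually_monomial e b"
    by (rule residually_monomial_factors)
  then have "residually_monomial (d + e) f"
    using \<open>f = a * b\<close> by (simp add: residually_monomial_mult)
  then have "d + e = 2"
    using f by (rule residually_monomial_unique)
  show "a dvd 1 \<or> b dvd 1"
  proof (rule ccontr)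
    assume "\<not> (a dvd 1 \<or> b dvd 1)"
    then have "d \<noteq> 0" "e \<noteq> 0"
      using de unit_if_residually_monomial_0 by metis+
    then have "d = 1" "e = 1"
      using \<open>d + e = 2\<close> by auto
    then have "coeff a 0 \<in> M" "coeff b 0 \<in> M"
      using de unfolding residually_monomial_def by auto
    then have "coeff f 0 = 0"
      using \<open>f = a * b\<close> square_zero by (simp add: coeff_mult)
    then show False
      using f0 by contradiction
  qed
qed

lemma x_power_4_eq: "c \<in> M \<Longrightarrow> [:c, 0, 1:] * [:-c, 0, 1:] = ([:0, 1:] ^ 4 :: 'a poly)"
  using square_zero[of c c] by (simp add: eval_nat_numeral)

lemma irreducible_x2_plus_const:
  assumes "c \<in> M" "c \<noteq> 0"
  shows "irreducible [:c, 0, 1:]"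
  using assms one_not_mem
  by (intro irreducible_if_residually_monomial_2)
    (auto simp: residually_monomial_def coeff_pCons split: nat.splits)

lemma two_in_lengths_x_power_4:
  assumes c: "c \<in> M" "c \<noteq> 0"
  shows "2 \<in> lengths ([:0, 1:] ^ 4 :: 'a poly)"
proof -
  have "length [[:c, 0, 1:], [:-c, 0, 1:]] \<in> lengths ([:0, 1:] ^ 4 :: 'a poly)"
    using c uminus_mem irreducible_x2_plus_const x_power_4_eq[OF c(1)]
    by (intro length_in_lengths) auto
  then show ?thesis
    by (simp add: numeral_2_eq_2)
qed

lemma three_in_lengths_x_power_5:
  assumes c: "c \<in> M" "c \<noteq> 0"
  shows "3 \<in> lengths ([:0, 1:] ^ 5 :: 'a poly)"
proof -
  have "[:0, 1:] * ([:c, 0, 1:] * [:-c, 0, 1:]) = ([:0, 1:] ^ 5 :: 'a poly)"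
    unfolding x_power_4_eq[OF c(1)] power_Suc[symmetric] by simp
  then have "length [[:0, 1:], [:c, 0, 1:], [:-c, 0, 1:]] \<in> lengths ([:0, 1:] ^ 5 :: 'a poly)"
    using c uminus_mem irreducible_x2_plus_const irreducible_x by (intro length_in_lengths) auto
  then show ?thesis
    by (simp add: numeral_3_eq_3)
qed

end

theorem proposition4p6:
  assumes "artinian_ring TYPE('a::comm_ring_1)"
    and "local_ring TYPE('a)"
    and "max_ideal TYPE('a) \<noteq> {0}"
    and "\<forall>a\<in>max_ideal TYPE('a). \<forall>b\<in>max_ideal TYPE('a). a * b = 0"
  shows "lengths ([:0, 1:] :: 'a poly) = {1} \<and>
         lengths ([:0, 1:] ^ 2 :: 'a poly) = {2} \<and>
         lengths ([:0, 1:] ^ 3 :: 'a poly) = {3} \<and>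
         lengths ([:0, 1:] ^ 4 :: 'a poly) = {2, 4} \<and>
         lengths ([:0, 1:] ^ 5 :: 'a poly) = {3, 5}"
proof -
  define M where "M = max_ideal TYPE('a)"
  have "maximal_ideal M"
    using assms(2) unfolding M_def max_ideal_def local_ring_def by (rule theI')
  then interpret square_zero_local M
    using assms(4) by unfold_locales (simp_all add: M_def)
  obtain c where c: "c \<in> M" "c \<noteq> 0"
    using assms(3) zero_mem unfolding M_def by blast
  have bounds: "1 \<le> k \<and> k \<le> n" if "k \<in> lengths ([:0, 1:] ^ n :: 'a poly)" for k n
    using subsetD[OF lengths_x_power_subset that] by simp
  show ?thesis
  proof (intro conjI set_eqI iffI)
    fix k
    show "k \<in> lengths ([:0, 1:] :: 'a poly) \<Longrightarrow> k \<in> {1}"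
      using bounds[of k 1] by simp
    show "k \<in> lengths ([:0, 1:] ^ 2 :: 'a poly) \<Longrightarrow> k \<in> {2}"
      using bounds[of k 2] one_not_in_lengths_x_power[of 2] by (cases "k = 1") auto
    show "k \<in> lengths ([:0, 1:] ^ 3 :: 'a poly) \<Longrightarrow> k \<in> {3}"
      using bounds[of k 3] one_not_in_lengths_x_power[of 3] two_not_in_lengths_x_power[of 3]
      by (cases "k = 1 \<or> k = 2") auto
    show "k \<in> lengths ([:0, 1:] ^ 4 :: 'a poly) \<Longrightarrow> k \<in> {2, 4}"
      using bounds[of k 4] one_not_in_lengths_x_power[of 4] pred_not_in_lengths_x_power[of 4]
      by (cases "k = 1 \<or> k = 3") auto
    show "k \<in> lengths ([:0, 1:] ^ 5 :: 'a poly) \<Longrightarrow> k \<in> {3, 5}"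
      using bounds[of k 5] one_not_in_lengths_x_power[of 5] two_not_in_lengths_x_power[of 5]
        pred_not_in_lengths_x_power[of 5]
      by (cases "k = 1 \<or> k = 2 \<or> k = 4") auto
  qed (use x_power_in_lengths[of 1] x_power_in_lengths two_in_lengths_x_power_4[OF c]
      three_in_lengths_x_power_5[OF c] in auto)
qed

end
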